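(* Let $(\Re,\oplus,\circ)$ be a commutative Krasner hyperring with identity $1\neq 0$, let $N$ be a proper hyperideal of $\Re$, and let $\phi:L(\Re)\to L(\Re)\cup\{\emptyset\}$ be a function with $\phi(N)\subseteq N$. Then the following are equivalent: (i) $N$ is a $\phi$-prime hyperideal of $\Re$; (ii) for every $a\in\Re- N$, $(N:a)=N\cup(\phi(N):a)$; (iii) for every $a\in\Re- N$, $(N:a)=N$ or $(N:a)=(\phi(N):a)$; (iv) for all hyperideals $K,L$ of $\Re$ with $K\circ L\subseteq N$ and $K\circ L\not\subseteq\phi(N)$, we have $K\subseteq N$ or $L\subseteq N$.
   Context: A commutative Krasner hyperring with identity is $(\Re,\oplus,\circ)$ where $(\Re,\oplus)$ is a canonical hypergroup (the hyperoperation $\oplus:\Re\times\Re\to P^*(\Re)$ is associative and commutative; there is $0$ with $a\oplus 0=\{a\}$; each $a$ has a unique $-a$ with $0\in a\oplus(-a)$; and $c\in a\oplus b$ implies $b\in c\oplus(-a)$ and $a\in c\oplus(-b)$), $(\Re,\circ)$ is a commutative semigroup with identity $1\neq0$ and $a\circ 0=0$, and $\circ$ distributes over $\oplus$. A hyperideal is a nonempty $N\subseteq\Re$ with $a\oplus(-b)\subseteq N$ and $r\circ a\in N$ for all $a,b\in N$, $r\in\Re$; $L(\Re)$ is the set of hyperideals. For $I\in L(\Re)\cup\{\emptyset\}$ and $a\in\Re$, $(I:a)=\{x\in\Re: x\circ a\in I\}$. For hyperideals $K,L$, $K\circ L$ is the hyperideal generated by $\{k\circ l: k\in K,l\in L\}$.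 "$x\in N-\phi(N)$" means $x\in N$ and $x\notin\phi(N)$. A hyperideal $N$ is $\phi$-prime if for all $a,b\in\Re$, $a\circ b\in N-\phi(N)$ implies $a\in N$ or $b\in N$. *)

theory Defs
  imports Main
begin

definition hneg :: "('a \<Rightarrow> 'a \<Rightarrow> 'a set) \<Rightarrow> 'a \<Rightarrow> 'a \<Rightarrow> 'a" where
  "hneg add zero a = (THE b. zero \<in> add a b)"

definition canonical_hypergroup :: "('a \<Rightarrow> 'a \<Rightarrow> 'a set) \<Rightarrow> 'a \<Rightarrow> bool" where
  "canonical_hypergroup add zero \<longleftrightarrow>
     (\<forall>a b. add a b \<noteq> {}) \<and>
     (\<forall>a b c. (\<Union>x\<in>add a b. add x c) = (\<Union>x\<in>add b c. add a x)) \<and>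
     (\<forall>a b. add a b = add b a) \<and>
     (\<forall>a. add a zero = {a}) \<and>
     (\<forall>a. \<exists>!b. zero \<in> add a b) \<and>
     (\<forall>a b c. c \<in> add a b \<longrightarrow>
         b \<in> add c (hneg add zero a) \<and> a \<in> add c (hneg add zero b))"

definition comm_krasner_hyperring ::
  "('a \<Rightarrow> 'a \<Rightarrow> 'a set) \<Rightarrow> ('a \<Rightarrow> 'a \<Rightarrow> 'a) \<Rightarrow> 'a \<Rightarrow> 'a \<Rightarrow> bool" where
  "comm_krasner_hyperring add mult zero one \<longleftrightarrow>
     canonical_hypergroup add zero \<and>
     (\<forall>a b c. mult (mult a b) c = mult a (mult b c)) \<and>
     (\<forall>a b. mult a b = mult b a) \<and>
     (\<forall>a. mult a one = a) \<and>
     one \<noteq> zero \<and>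
     (\<forall>a. mult a zero = zero) \<and>
     (\<forall>r a b. mult r ` add a b = add (mult r a) (mult r b))"

definition hyperideal ::
  "('a \<Rightarrow> 'a \<Rightarrow> 'a set) \<Rightarrow> ('a \<Rightarrow> 'a \<Rightarrow> 'a) \<Rightarrow> 'a \<Rightarrow> 'a set \<Rightarrow> bool" where
  "hyperideal add mult zero N \<longleftrightarrow>
     N \<noteq> {} \<and>
     (\<forall>a\<in>N. \<forall>b\<in>N. add a (hneg add zero b) \<subseteq> N) \<and>
     (\<forall>r a. a \<in> N \<longrightarrow> mult r a \<in> N)"

definition hcolon :: "('a \<Rightarrow> 'a \<Rightarrow> 'a) \<Rightarrow> 'a set \<Rightarrow> 'a \<Rightarrow> 'a set" where
  "hcolon mult I a = {x. mult x a \<in> I}"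

definition hideal_prod ::
  "('a \<Rightarrow> 'a \<Rightarrow> 'a set) \<Rightarrow> ('a \<Rightarrow> 'a \<Rightarrow> 'a) \<Rightarrow> 'a \<Rightarrow> 'a set \<Rightarrow> 'a set \<Rightarrow> 'a set" where
  "hideal_prod add mult zero K L =
     \<Inter>{J. hyperideal add mult zero J \<and> {mult k l | k l. k \<in> K \<and> l \<in> L} \<subseteq> J}"

definition phi_prime ::
  "('a \<Rightarrow> 'a \<Rightarrow> 'a set) \<Rightarrow> ('a \<Rightarrow> 'a \<Rightarrow> 'a) \<Rightarrow> 'a \<Rightarrow> ('a set \<Rightarrow> 'a set) \<Rightarrow> 'a set \<Rightarrow> bool" where
  "phi_prime add mult zero phi N \<longleftrightarrow>
     hyperideal add mult zero N \<and>
     (\<forall>a b. mult a b \<in> N \<and> mult a b \<notin> phi N \<longrightarrow> a \<in> N \<or> b \<in> N)"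

end

(*
  The colon (N : a) is a hyperideal containing N \<union> (\<phi>(N) : a), and \<phi>-primeness says
  precisely that the two coincide whenever a \<notin> N. A hyperideal that is the union of two
  hyperideals equals one of them (a sum of elements taken from the two differences would lie
  in neither), which gives the dichotomy (N : a) = N or (N : a) = (\<phi>(N) : a).
  For the statement about products K \<circ> L \<subseteq> N with K, L \<nsubseteq> N: the dichotomy forces
  k L \<subseteq> \<phi>(N) for every k \<in> K - N, and every element of K \<inter> N is a difference of two
  elements of K - N, so K \<circ> L \<subseteq> \<phi>(N). Conversely, principal hyperideals reduce the
  product condition to \<phi>-primeness.
*)
theory Submission
  imports Defs
begin

lemma canonical_hypergroupD:
  assumes "canonical_hypergroup add zero"
  shows "add a b \<noteq> {}" and "add a b = add b a" and "add a zero = {a}"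
    and "\<exists>!b. zero \<in> add a b"
    and "c \<in> add a b \<Longrightarrow> b \<in> add c (hneg add zero a)"
    and "c \<in> add a b \<Longrightarrow> a \<in> add c (hneg add zero b)"
  using assms unfolding canonical_hypergroup_def by metis+

lemma comm_krasner_hyperringD:
  assumes "comm_krasner_hyperring add mult zero one"
  shows "canonical_hypergroup add zero" and "mult (mult a b) c = mult a (mult b c)"
    and "mult a b = mult b a" and "mult a one = a" and "mult a zero = zero"
    and "mult r ` add a b = add (mult r a) (mult r b)"
  using assms unfolding comm_krasner_hyperring_def by metis+

locale krasner_hypergroup =
  fixes add :: "'a \<Rightarrow> 'a \<Rightarrow> 'a set" and zero :: 'a
  assumes canonical: "canonical_hypergroup add zero"
begin

abbreviation neg :: "'a \<Rightarrow> 'a" where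
  "neg a \<equiv> hneg add zero a"

lemmas add_nonempty = canonical_hypergroupD(1)[OF canonical]
lemmas add_commute = canonical_hypergroupD(2)[OF canonical]
lemmas add_zero_right = canonical_hypergroupD(3)[OF canonical]
lemmas mem_add_neg_left = canonical_hypergroupD(5)[OF canonical]
lemmas mem_add_neg_right = canonical_hypergroupD(6)[OF canonical]

lemma zero_mem_add_neg: "zero \<in> add a (neg a)"
  unfolding hneg_def using canonical_hypergroupD(4)[OF canonical] by (rule theI')

lemma neg_unique: "zero \<in> add a b \<Longrightarrow> b = neg a"
  using canonical_hypergroupD(4)[OF canonical] zero_mem_add_neg by blast

lemma neg_neg: "neg (neg a) = a"
  using zero_mem_add_neg add_commute neg_unique by metis

lemma hyperideal_diff: "hyperideal add mult zero I \<Longrightarrow> a \<in> I \<Longrightarrow> b \<in> I \<Longrightarrow> add a (neg b) \<subseteq> I"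
  unfolding hyperideal_def by blast

lemma hyperideal_zero: "hyperideal add mult zero I \<Longrightarrow> zero \<in> I"
  using hyperideal_diff zero_mem_add_neg unfolding hyperideal_def by blast

lemma hyperideal_neg: "hyperideal add mult zero I \<Longrightarrow> a \<in> I \<Longrightarrow> neg a \<in> I"
  using hyperideal_diff[of _ _ zero a] hyperideal_zero add_commute add_zero_right by blast

lemma hyperideal_add: "hyperideal add mult zero I \<Longrightarrow> a \<in> I \<Longrightarrow> b \<in> I \<Longrightarrow> add a b \<subseteq> I"
  using hyperideal_diff[of _ _ a "neg b"] hyperideal_neg neg_neg by metis

lemma hyperideal_union_cases:
  assumes J: "hyperideal add mult zero J" and K: "hyperideal add mult zero K"
    and JK: "hyperideal add mult zero (J \<union> K)"
  shows "J \<subseteq> K \<or> K \<subseteq> J"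
proof (rule ccontr)
  assume "\<not> (J \<subseteq> K \<or> K \<subseteq> J)"
  then obtain x y where x: "x \<in> J" "x \<notin> K" and y: "y \<in> K" "y \<notin> J" by blast
  obtain z where z: "z \<in> add x y" using add_nonempty by blast
  have "z \<in> J \<union> K" using z hyperideal_add[OF JK] x y by blast
  then show False
  proof
    assume "z \<in> J"
    then show False using mem_add_neg_left[OF z] hyperideal_diff[OF J] x y by blast
  next
    assume "z \<in> K"
    then show False using mem_add_neg_right[OF z] hyperideal_diff[OF K] x y by blast
  qed
qed

lemma hyperideal_mem_add_neg_outside:
  assumes K: "hyperideal add mult zero K" and N: "hyperideal add mult zero N"
    and a: "a \<in> K" "a \<in> N" and b: "b \<in> K" "b \<notin> N"
  obtains z where "z \<in> K" "z \<notin> N" "a \<in> add z (neg b)"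
proof -
  obtain z where z: "z \<in> add a b" using add_nonempty by blast
  have "z \<in> K" using z hyperideal_add[OF K a(1) b(1)] by blast
  moreover have "z \<notin> N" using mem_add_neg_left[OF z] hyperideal_diff[OF N _ a(2)] b(2) by blast
  ultimately show thesis using that mem_add_neg_right[OF z] by blast
qed

end

lemma mem_hideal_prod: "k \<in> K \<Longrightarrow> l \<in> L \<Longrightarrow> mult k l \<in> hideal_prod add mult zero K L"
  unfolding hideal_prod_def by blast

lemma hideal_prod_subset:
  "hyperideal add mult zero J \<Longrightarrow> (\<And>k l. k \<in> K \<Longrightarrow> l \<in> L \<Longrightarrow> mult k l \<in> J)
   \<Longrightarrow> hideal_prod add mult zero K L \<subseteq> J"
  unfolding hideal_prod_def by blast

lemma hcolon_mono: "P \<subseteq> N \<Longrightarrow> hcolon mult P a \<subseteq> hcolon mult N a"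
  unfolding hcolon_def by blast

lemma hcolon_empty [simp]: "hcolon mult {} a = {}"
  unfolding hcolon_def by blast

locale krasner_hyperring =
  fixes add :: "'a \<Rightarrow> 'a \<Rightarrow> 'a set" and mult :: "'a \<Rightarrow> 'a \<Rightarrow> 'a" and zero one :: 'a
  assumes ring: "comm_krasner_hyperring add mult zero one"

sublocale krasner_hyperring \<subseteq> krasner_hypergroup add zero
  by unfold_locales (rule comm_krasner_hyperringD(1)[OF ring])

context krasner_hyperring
begin

lemmas mult_assoc = comm_krasner_hyperringD(2)[OF ring]
lemmas mult_commute = comm_krasner_hyperringD(3)[OF ring]
lemmas mult_add_distrib = comm_krasner_hyperringD(6)[OF ring]

lemma mult_one_left: "mult one a = a"
  using comm_krasner_hyperringD(4)[OF ring] mult_commute by metis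

lemma mult_zero_left: "mult zero a = zero"
  using comm_krasner_hyperringD(5)[OF ring] mult_commute by metis

lemma mult_mem_add: "z \<in> add x y \<Longrightarrow> mult z a \<in> add (mult x a) (mult y a)"
  using mult_add_distrib[of a x y] mult_commute by (metis image_eqI)

lemma neg_mult: "neg (mult a b) = mult (neg a) b"
proof -
  have "zero \<in> add (mult a b) (mult (neg a) b)"
    using mult_mem_add[OF zero_mem_add_neg] mult_zero_left by metis
  then show ?thesis by (rule neg_unique[symmetric])
qed

lemma hyperideal_mult_right: "hyperideal add mult zero I \<Longrightarrow> x \<in> I \<Longrightarrow> mult x a \<in> I"
  unfolding hyperideal_def using mult_commute by metis

lemma hyperideal_subset_hcolon: "hyperideal add mult zero I \<Longrightarrow> I \<subseteq> hcolon mult I a"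
  unfolding hcolon_def using hyperideal_mult_right by blast

lemma hyperideal_hcolon:
  assumes I: "hyperideal add mult zero I"
  shows "hyperideal add mult zero (hcolon mult I a)"
proof -
  have "zero \<in> hcolon mult I a"
    unfolding hcolon_def using hyperideal_zero[OF I] mult_zero_left by simp
  moreover have "add x (neg y) \<subseteq> hcolon mult I a"
    if xy: "x \<in> hcolon mult I a" "y \<in> hcolon mult I a" for x y
  proof
    fix z assume "z \<in> add x (neg y)"
    then have "mult z a \<in> add (mult x a) (neg (mult y a))"
      using mult_mem_add neg_mult by metis
    then show "z \<in> hcolon mult I a"
      using xy hyperideal_diff[OF I] unfolding hcolon_def by blast
  qed
  moreover have "mult r x \<in> hcolon mult I a" if "x \<in> hcolon mult I a" for r x
    using that I mult_assoc unfolding hcolon_def hyperideal_def by simp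
  ultimately show ?thesis
    unfolding hyperideal_def by blast
qed

lemma hyperideal_range_mult: "hyperideal add mult zero (range (\<lambda>r. mult r a))"
proof -
  have "add (mult r a) (neg (mult s a)) \<subseteq> range (\<lambda>r. mult r a)" for r s
  proof -
    have "add (mult r a) (neg (mult s a)) = add (mult a r) (mult a (neg s))"
      using neg_mult mult_commute by metis
    also have "\<dots> = mult a ` add r (neg s)"
      by (rule mult_add_distrib[symmetric])
    finally show ?thesis
      using mult_commute by auto
  qed
  moreover have "mult t (mult r a) \<in> range (\<lambda>r. mult r a)" for t r
    using mult_assoc by (metis rangeI)
  ultimately show ?thesis
    unfolding hyperideal_def by blast
qed

lemma phi_prime_iff_hcolon_eq_union:
  assumes N: "hyperideal add mult zero N" and phiN: "phi N \<subseteq> N"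
  shows "phi_prime add mult zero phi N
           \<longleftrightarrow> (\<forall>a. a \<notin> N \<longrightarrow> hcolon mult N a = N \<union> hcolon mult (phi N) a)"
proof
  assume prime: "phi_prime add mult zero phi N"
  show "\<forall>a. a \<notin> N \<longrightarrow> hcolon mult N a = N \<union> hcolon mult (phi N) a"
  proof (intro allI impI)
    fix a assume "a \<notin> N"
    then have "hcolon mult N a \<subseteq> N \<union> hcolon mult (phi N) a"
      using prime unfolding phi_prime_def hcolon_def by blast
    then show "hcolon mult N a = N \<union> hcolon mult (phi N) a"
      using hyperideal_subset_hcolon[OF N] hcolon_mono[OF phiN] by blast
  qed
next
  assume colon: "\<forall>a. a \<notin> N \<longrightarrow> hcolon mult N a = N \<union> hcolon mult (phi N) a"
  have "a \<in> N \<or> b \<in> N" if "mult a b \<in> N" "mult a b \<notin> phi N" for a b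
    using colon[rule_format, of b] that unfolding hcolon_def by blast
  then show "phi_prime add mult zero phi N"
    using N unfolding phi_prime_def by blast
qed

lemma phi_prime_iff_hcolon_cases:
  assumes N: "hyperideal add mult zero N" and phiN: "phi N \<subseteq> N"
    and phi: "phi N = {} \<or> hyperideal add mult zero (phi N)"
  shows "phi_prime add mult zero phi N
           \<longleftrightarrow> (\<forall>a. a \<notin> N \<longrightarrow> hcolon mult N a = N \<or> hcolon mult N a = hcolon mult (phi N) a)"
proof
  assume prime: "phi_prime add mult zero phi N"
  show "\<forall>a. a \<notin> N \<longrightarrow> hcolon mult N a = N \<or> hcolon mult N a = hcolon mult (phi N) a"
  proof (intro allI impI)
    fix a assume "a \<notin> N"
    then have union: "hcolon mult N a = N \<union> hcolon mult (phi N) a"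
      using prime phi_prime_iff_hcolon_eq_union[where phi = phi, OF N phiN] by blast
    show "hcolon mult N a = N \<or> hcolon mult N a = hcolon mult (phi N) a"
      using phi
    proof
      assume "phi N = {}"
      then show ?thesis using union by simp
    next
      assume "hyperideal add mult zero (phi N)"
      then have "N \<subseteq> hcolon mult (phi N) a \<or> hcolon mult (phi N) a \<subseteq> N"
        using hyperideal_union_cases[OF N] hyperideal_hcolon hyperideal_hcolon[OF N] union
        by metis
      then show ?thesis using union by blast
    qed
  qed
next
  assume colon: "\<forall>a. a \<notin> N \<longrightarrow> hcolon mult N a = N \<or> hcolon mult N a = hcolon mult (phi N) a"
  have "a \<in> N \<or> b \<in> N" if "mult a b \<in> N" "mult a b \<notin> phi N" for a b
    using colon[rule_format, of b] that unfolding hcolon_def by blast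
  then show "phi_prime add mult zero phi N"
    using N unfolding phi_prime_def by blast
qed

lemma hcolon_cases_imp_hideal_prod_subset:
  assumes N: "hyperideal add mult zero N"
    and P: "P = {} \<or> hyperideal add mult zero P"
    and colon: "\<forall>a. a \<notin> N \<longrightarrow> hcolon mult N a = N \<or> hcolon mult N a = hcolon mult P a"
    and K: "hyperideal add mult zero K" and L: "hyperideal add mult zero L"
    and KL: "hideal_prod add mult zero K L \<subseteq> N"
    and K_N: "\<not> K \<subseteq> N" and L_N: "\<not> L \<subseteq> N"
  shows "hideal_prod add mult zero K L \<subseteq> P"
proof -
  obtain a' where a': "a' \<in> K" "a' \<notin> N" using K_N by blast
  obtain b where b: "b \<in> L" "b \<notin> N" using L_N by blast
  have outside: "mult a l \<in> P" if a: "a \<in> K" "a \<notin> N" and l: "l \<in> L" for a l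
  proof -
    have L_colon: "L \<subseteq> hcolon mult N a"
    proof
      fix x assume "x \<in> L"
      then have "mult a x \<in> N" using KL mem_hideal_prod[OF a(1)] by blast
      then show "x \<in> hcolon mult N a"
        unfolding hcolon_def using mult_commute[of x a] by simp
    qed
    then have "hcolon mult N a \<noteq> N" using b by blast
    then have "hcolon mult N a = hcolon mult P a" using colon a(2) by blast
    then have "mult l a \<in> P" using L_colon l unfolding hcolon_def by blast
    then show ?thesis using mult_commute[of l a] by simp
  qed
  then have "P \<noteq> {}" using a' b by blast
  then have P_ideal: "hyperideal add mult zero P" using P by blast
  have "mult a l \<in> P" if a: "a \<in> K" and l: "l \<in> L" for a l
  proof (cases "a \<in> N")
    case True
    then obtain z where z: "z \<in> K" "z \<notin> N" and "a \<in> add z (neg a')"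
      using hyperideal_mem_add_neg_outside[OF K N a] a' by blast
    then have "mult a l \<in> add (mult z l) (neg (mult a' l))"
      using mult_mem_add neg_mult by metis
    moreover have "add (mult z l) (neg (mult a' l)) \<subseteq> P"
      using hyperideal_diff[OF P_ideal] outside[OF z l] outside[OF a' l] by blast
    ultimately show ?thesis by blast
  next
    case False
    then show ?thesis using outside a l by blast
  qed
  then show ?thesis using hideal_prod_subset[OF P_ideal] by blast
qed

lemma phi_prime_iff_hideal_prod:
  assumes N: "hyperideal add mult zero N" and phiN: "phi N \<subseteq> N"
    and phi: "phi N = {} \<or> hyperideal add mult zero (phi N)"
  shows "phi_prime add mult zero phi N
           \<longleftrightarrow> (\<forall>K L. hyperideal add mult zero K \<and> hyperideal add mult zero L \<and>
                   hideal_prod add mult zero K L \<subseteq> N \<and> \<not> hideal_prod add mult zero K L \<subseteq> phi N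
                   \<longrightarrow> K \<subseteq> N \<or> L \<subseteq> N)"
proof
  assume "phi_prime add mult zero phi N"
  then have colon: "\<forall>a. a \<notin> N \<longrightarrow> hcolon mult N a = N \<or> hcolon mult N a = hcolon mult (phi N) a"
    using phi_prime_iff_hcolon_cases[where phi = phi, OF N phiN phi] by blast
  show "\<forall>K L. hyperideal add mult zero K \<and> hyperideal add mult zero L \<and>
          hideal_prod add mult zero K L \<subseteq> N \<and> \<not> hideal_prod add mult zero K L \<subseteq> phi N
          \<longrightarrow> K \<subseteq> N \<or> L \<subseteq> N"
  proof (intro allI impI)
    fix K L
    assume "hyperideal add mult zero K \<and> hyperideal add mult zero L \<and>
      hideal_prod add mult zero K L \<subseteq> N \<and> \<not> hideal_prod add mult zero K L \<subseteq> phi N"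
    then show "K \<subseteq> N \<or> L \<subseteq> N"
      using hcolon_cases_imp_hideal_prod_subset[OF N phi colon, of K L] by blast
  qed
next
  assume prod: "\<forall>K L. hyperideal add mult zero K \<and> hyperideal add mult zero L \<and>
                  hideal_prod add mult zero K L \<subseteq> N \<and> \<not> hideal_prod add mult zero K L \<subseteq> phi N
                  \<longrightarrow> K \<subseteq> N \<or> L \<subseteq> N"
  have "a \<in> N \<or> b \<in> N" if ab: "mult a b \<in> N" "mult a b \<notin> phi N" for a b
  proof -
    let ?K = "range (\<lambda>r. mult r a)" and ?L = "range (\<lambda>r. mult r b)"
    have "mult (mult r a) (mult s b) \<in> N" for r s
    proof -
      have "mult (mult r a) (mult s b) = mult r (mult (mult a s) b)"
        by (simp only: mult_assoc)
      also have "\<dots> = mult r (mult s (mult a b))"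
        by (simp only: mult_commute[of a s] mult_assoc)
      finally show ?thesis
        using N ab(1) unfolding hyperideal_def by simp
    qed
    then have KL_N: "hideal_prod add mult zero ?K ?L \<subseteq> N"
      by (auto intro!: hideal_prod_subset[OF N])
    have a_K: "a \<in> ?K" and b_L: "b \<in> ?L"
      using mult_one_left by (metis rangeI)+
    then have KL_phi: "\<not> hideal_prod add mult zero ?K ?L \<subseteq> phi N"
      using mem_hideal_prod[of a ?K b ?L] ab(2) by blast
    have "?K \<subseteq> N \<or> ?L \<subseteq> N"
      using prod[rule_format, of ?K ?L] hyperideal_range_mult KL_N KL_phi by blast
    then show ?thesis using a_K b_L by blast
  qed
  then show "phi_prime add mult zero phi N"
    using N unfolding phi_prime_def by blast
qed

end

theorem mainTheorem1:
  fixes add :: "'a \<Rightarrow> 'a \<Rightarrow> 'a set" and mult :: "'a \<Rightarrow> 'a \<Rightarrow> 'a"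
    and zero one :: 'a and phi :: "'a set \<Rightarrow> 'a set" and N :: "'a set"
  assumes R: "comm_krasner_hyperring add mult zero one"
    and N: "hyperideal add mult zero N" and proper: "N \<noteq> UNIV"
    and phi: "\<forall>I. hyperideal add mult zero I \<longrightarrow> hyperideal add mult zero (phi I) \<or> phi I = {}"
    and phiN: "phi N \<subseteq> N"
  shows "(phi_prime add mult zero phi N
           \<longleftrightarrow> (\<forall>a. a \<notin> N \<longrightarrow> hcolon mult N a = N \<union> hcolon mult (phi N) a))
       \<and> (phi_prime add mult zero phi N
           \<longleftrightarrow> (\<forall>a. a \<notin> N \<longrightarrow> hcolon mult N a = N \<or> hcolon mult N a = hcolon mult (phi N) a))
       \<and> (phi_prime add mult zero phi N
           \<longleftrightarrow> (\<forall>K L. hyperideal add mult zero K \<and> hyperideal add mult zero L \<and>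
                   hideal_prod add mult zero K L \<subseteq> N \<and> \<not> hideal_prod add mult zero K L \<subseteq> phi N
                   \<longrightarrow> K \<subseteq> N \<or> L \<subseteq> N))"
proof -
  interpret krasner_hyperring add mult zero one by (rule krasner_hyperring.intro[OF R])
  have phi_N: "phi N = {} \<or> hyperideal add mult zero (phi N)"
    using phi N by blast
  show ?thesis
    using phi_prime_iff_hcolon_eq_union[where phi = phi, OF N phiN]
      phi_prime_iff_hcolon_cases[where phi = phi, OF N phiN phi_N]
      phi_prime_iff_hideal_prod[where phi = phi, OF N phiN phi_N]
    by blast
qed

end
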